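(* Let $n>p$ be positive integers, $A\in\operatorname{Skew}(p)$ and $H\in\mathbb{R}^{(n-p)\times p}$. Then \[ \begin{pmatrix} I_p & A\\ 0 & H\end{pmatrix}\exp_m\begin{pmatrix} A & A^2-H^TH\\ I_p & A\end{pmatrix}\begin{pmatrix} I_p\\ 0\end{pmatrix}=\exp_m\begin{pmatrix} 2A & -H^T\\ H & 0\end{pmatrix}\begin{pmatrix} I_p\\ 0\end{pmatrix}. \]
   Context: $\operatorname{Skew}(p)$ denotes the real skew-symmetric $p\times p$ matrices and $\exp_m$ the matrix exponential. *)

theory Defs
  imports "HOL-Analysis.Analysis"
begin

fun matpow :: "real^'n^'n \<Rightarrow> nat \<Rightarrow> real^'n^'n" where
  "matpow M 0 = mat 1"
| "matpow M (Suc k) = M ** matpow M k"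

definition exp_m :: "real^'n^'n \<Rightarrow> real^'n^'n" where
  "exp_m M = (\<Sum>k. (1 / fact k) *\<^sub>R matpow M k)"

definition block :: "real^'c^'a \<Rightarrow> real^'d^'a \<Rightarrow> real^'c^'b \<Rightarrow> real^'d^'b
    \<Rightarrow> real^('c + 'd)^('a + 'b)" where
  "block P Q R S = (\<chi> i j. case i of
      Inl a \<Rightarrow> (case j of Inl c \<Rightarrow> P $ a $ c | Inr d \<Rightarrow> Q $ a $ d)
    | Inr b \<Rightarrow> (case j of Inl c \<Rightarrow> R $ b $ c | Inr d \<Rightarrow> S $ b $ d))"

definition vblock :: "real^'c^'a \<Rightarrow> real^'c^'b \<Rightarrow> real^'c^('a + 'b)" where
  "vblock P R = (\<chi> i j. case i of Inl a \<Rightarrow> P $ a $ j | Inr b \<Rightarrow> R $ b $ j)"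

end

theory Submission
  imports Defs
begin

text \<open>With \<open>L = [I A; 0 H]\<close>, \<open>M = [A, A\<^sup>2 - H\<^sup>T H; I, A]\<close> and \<open>N = [2A, -H\<^sup>T; H, 0]\<close>
  a block multiplication gives \<open>L M = N L\<close>. Such an intertwining relation passes to all powers
  and hence, by continuity of matrix multiplication, to the exponential series:
  \<open>L exp_m(M) = exp_m(N) L\<close>. Multiplying on the right by \<open>[I; 0]\<close> and using \<open>L [I; 0] = [I; 0]\<close>
  gives the identity.\<close>

lemma bilinear_matrix_matrix_mult:
  "bilinear ((**) :: real^'n^'m \<Rightarrow> real^'k^'n \<Rightarrow> real^'k^'m)"
  unfolding bilinear_def linear_iff
  by (simp add: matrix_add_ldistrib matrix_scalar_ac scalar_matrix_assoc[symmetric])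
     (simp add: matrix_matrix_mult_def vec_eq_iff sum.distrib distrib_right)

lemma bounded_bilinear_matrix_matrix_mult:
  "bounded_bilinear ((**) :: real^'n^'m \<Rightarrow> real^'k^'n \<Rightarrow> real^'k^'m)"
  using bilinear_conv_bounded_bilinear bilinear_matrix_matrix_mult by blast

lemma norm_matpow_le:
  fixes M :: "real^'n^'n"
  assumes "K \<ge> 0"
    and submult: "\<And>(X :: real^'n^'n) (Y :: real^'n^'n). norm (X ** Y) \<le> norm X * norm Y * K"
  shows "norm (matpow M k) \<le> norm (mat 1 :: real^'n^'n) * (K * norm M) ^ k"
proof (induction k)
  case 0
  then show ?case by simp
next
  case (Suc k)
  have "norm (matpow M (Suc k)) \<le> K * norm M * norm (matpow M k)"
    using submult[of M "matpow M k"] by (simp add: mult_ac)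
  also have "\<dots> \<le> K * norm M * (norm (mat 1 :: real^'n^'n) * (K * norm M) ^ k)"
    using Suc \<open>K \<ge> 0\<close> by (simp add: mult_left_mono)
  finally show ?case by (simp add: mult_ac)
qed

lemma exp_m_sums:
  fixes M :: "real^'n^'n"
  shows "(\<lambda>k. (1 / fact k) *\<^sub>R matpow M k) sums exp_m M"
proof -
  obtain K where "K > 0"
    and submult: "\<And>(X :: real^'n^'n) (Y :: real^'n^'n). norm (X ** Y) \<le> norm X * norm Y * K"
    using bounded_bilinear.pos_bounded[OF bounded_bilinear_matrix_matrix_mult] by blast
  let ?c = "K * norm M"
  have "summable (\<lambda>k. norm (mat 1 :: real^'n^'n) * (inverse (fact k) * ?c ^ k))"
    by (intro summable_mult summable_exp)
  moreover have "norm ((1 / fact k) *\<^sub>R matpow M k)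
      \<le> norm (mat 1 :: real^'n^'n) * (inverse (fact k) * ?c ^ k)" for k
  proof -
    have "inverse (fact k) * norm (matpow M k) \<le> inverse (fact k) * (norm (mat 1 :: real^'n^'n) * ?c ^ k)"
      by (intro mult_left_mono norm_matpow_le[OF less_imp_le[OF \<open>K > 0\<close>] submult]) simp
    then show ?thesis
      by (simp add: divide_inverse mult_ac)
  qed
  ultimately have "summable (\<lambda>k. (1 / fact k) *\<^sub>R matpow M k)"
    by (rule summable_comparison_test'[where N = 0])
  then show ?thesis
    unfolding exp_m_def by (rule summable_sums)
qed

lemma matpow_intertwine:
  fixes L :: "real^'m^'n" and M :: "real^'m^'m" and N :: "real^'n^'n"
  assumes "L ** M = N ** L"
  shows "L ** matpow M k = matpow N k ** L"
proof (induction k)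
  case 0
  then show ?case by simp
next
  case (Suc k)
  have "L ** matpow M (Suc k) = N ** (L ** matpow M k)"
    by (simp add: assms matrix_mul_assoc)
  also have "\<dots> = matpow N (Suc k) ** L"
    by (simp add: Suc matrix_mul_assoc)
  finally show ?case .
qed

lemma exp_m_intertwine:
  fixes L :: "real^'m^'n" and M :: "real^'m^'m" and N :: "real^'n^'n"
  assumes "L ** M = N ** L"
  shows "L ** exp_m M = exp_m N ** L"
proof -
  interpret L_mult: bounded_bilinear "(**) :: real^'m^'n \<Rightarrow> real^'m^'m \<Rightarrow> real^'m^'n"
    by (rule bounded_bilinear_matrix_matrix_mult)
  interpret mult_L: bounded_bilinear "(**) :: real^'n^'n \<Rightarrow> real^'m^'n \<Rightarrow> real^'m^'n"
    by (rule bounded_bilinear_matrix_matrix_mult)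
  have "(\<lambda>k. L ** ((1 / fact k) *\<^sub>R matpow M k)) sums (L ** exp_m M)"
    by (rule bounded_linear.sums[OF L_mult.bounded_linear_right exp_m_sums])
  moreover have "(\<lambda>k. ((1 / fact k) *\<^sub>R matpow N k) ** L) sums (exp_m N ** L)"
    by (rule bounded_linear.sums[OF mult_L.bounded_linear_left exp_m_sums])
  moreover have "L ** ((1 / fact k) *\<^sub>R matpow M k) = ((1 / fact k) *\<^sub>R matpow N k) ** L" for k
    by (simp add: L_mult.scaleR_right mult_L.scaleR_left matpow_intertwine[OF assms])
  ultimately show ?thesis
    using sums_unique2 by force
qed

lemma sum_UNIV_Plus:
  fixes f :: "('a::finite + 'b::finite) \<Rightarrow> 'c::comm_monoid_add"
  shows "sum f UNIV = (\<Sum>a\<in>UNIV. f (Inl a)) + (\<Sum>b\<in>UNIV. f (Inr b))"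
  using sum.Plus[of "UNIV::'a set" "UNIV::'b set" f] by (simp add: o_def)

lemma block_mult:
  "block P Q R S ** block P' Q' R' S' =
   block (P ** P' + Q ** R') (P ** Q' + Q ** S') (R ** P' + S ** R') (R ** Q' + S ** S')"
  unfolding block_def matrix_matrix_mult_def
  by (auto simp: vec_eq_iff sum_UNIV_Plus split: sum.splits)

lemma block_mult_vblock:
  "block P Q R S ** vblock P' R' = vblock (P ** P' + Q ** R') (R ** P' + S ** R')"
  unfolding block_def vblock_def matrix_matrix_mult_def
  by (auto simp: vec_eq_iff sum_UNIV_Plus split: sum.splits)

lemma block_intertwine:
  fixes A :: "real^'p^'p" and H :: "real^'p^'q"
  shows "block (mat 1) A 0 H ** block A (A ** A - transpose H ** H) (mat 1) A
       = block (2 *\<^sub>R A) (- transpose H) H (0 :: real^'q^'q) ** block (mat 1) A 0 H"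
proof -
  have "A + A = 2 *\<^sub>R A"
    by (rule scaleR_2[symmetric])
  moreover have "A ** A - transpose H ** H + A ** A = (2 *\<^sub>R A) ** A + (- transpose H) ** H"
    unfolding scaleR_2 bounded_bilinear.add_left[OF bounded_bilinear_matrix_matrix_mult]
      bounded_bilinear.minus_left[OF bounded_bilinear_matrix_matrix_mult]
    by (simp add: algebra_simps)
  ultimately show ?thesis
    unfolding block_mult matrix_mul_lid matrix_mul_rid times0_left times0_right add_0 add_0_right
    by (simp only:)
qed

theorem lemma3p2:
  fixes A :: "real^'p^'p" and H :: "real^'p^'q"
  assumes "transpose A = - A"
  shows "block (mat 1) A (0 :: real^'p^'q) H
           ** exp_m (block A (A ** A - transpose H ** H) (mat 1) A)
           ** vblock (mat 1) (0 :: real^'p^'p)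
         = exp_m (block (2 *\<^sub>R A) (- transpose H) H (0 :: real^'q^'q))
           ** vblock (mat 1) (0 :: real^'p^'q)"
proof -
  let ?L = "block (mat 1) A (0 :: real^'p^'q) H"
  let ?M = "block A (A ** A - transpose H ** H) (mat 1) A"
  let ?N = "block (2 *\<^sub>R A) (- transpose H) H (0 :: real^'q^'q)"
  have "?L ** exp_m ?M ** vblock (mat 1) 0 = exp_m ?N ** (?L ** vblock (mat 1) 0)"
    by (simp add: exp_m_intertwine[OF block_intertwine] matrix_mul_assoc)
  also have "?L ** vblock (mat 1) (0 :: real^'p^'p) = vblock (mat 1) 0"
    by (simp add: block_mult_vblock)
  finally show ?thesis .
qed

end
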